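(* Let $w$ be a non-empty word in $0,1,2$. The four-dimensional sequential function $f^{(1)}_w(z)$ (i.e. the defining integral) is well defined (convergent) if and only if $w$ begins with the letter $2$.
   Context: For a word $w=a_1\cdots a_n$ in the letters $0,1,2$, the sequential graph $G_w$ has vertices $0,1,v_1,\dots,v_n$, edges $v_iv_{i+1}$ ($1\le i<n$), and for each $i$ an edge $v_i0$ if $a_i=0$, an edge $v_i1$ if $a_i=1$, and both edges $v_i0,v_i1$ if $a_i=2$. The sequential function $f^{(1)}_w$ is the graphical function in $d=4$ of the graph obtained from $G_w$ by adding a vertex $z$ and an edge $v_nz$: $f^{(1)}_w(z)=\prod_{i=1}^n\int_{\mathbb{R}^4}\frac{d^4x_{v_i}}{\pi^2}\prod_e\|x_e-y_e\|^{-2}$, product over edges, with $0$ the origin, $1$ a unit vector $e_1$, $z\in\mathbb{R}^4\setminus\{0,e_1\}$. *)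

theory Defs
  imports "HOL-Analysis.Analysis"
begin

datatype letter = L0 | L1 | L2

text \<open>The external vertex 1: the unit vector e_1 in R^4.\<close>
definition e1 :: "real^4" where
  "e1 = axis 1 1"

definition propagator :: "real^4 \<Rightarrow> real^4 \<Rightarrow> real" where
  "propagator a b = 1 / (norm (a - b))^2"

text \<open>Weight of the edges from v_i to the external vertices 0 and 1 determined by the letter a_i.\<close>
fun letter_weight :: "letter \<Rightarrow> real^4 \<Rightarrow> real" where
  "letter_weight L0 x = propagator x 0"
| "letter_weight L1 x = propagator x e1"
| "letter_weight L2 x = propagator x 0 * propagator x e1"

text \<open>Integrand of the sequential function f^(1)_w(z). The internal vertex v_(i+1) has
  position x i (i < n), the edges are v_i v_(i+1), the letter edges and v_n z.\<close>
definition seq_integrand :: "letter list \<Rightarrow> real^4 \<Rightarrow> (nat \<Rightarrow> real^4) \<Rightarrow> real" where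
  "seq_integrand w z x =
     (\<Prod>i<length w. letter_weight (w ! i) (x i))
   * (\<Prod>i<length w - 1. propagator (x i) (x (Suc i)))
   * propagator (x (length w - 1)) z
   / pi ^ (2 * length w)"

text \<open>The defining integral over (R^4)^n (nonnegative integrand, hence a Lebesgue integral
  in [0, \<infinity>]).\<close>
definition seq_integral :: "letter list \<Rightarrow> real^4 \<Rightarrow> ennreal" where
  "seq_integral w z =
     (\<integral>\<^sup>+ x. ennreal (seq_integrand w z x) \<partial>(PiM {..<length w} (\<lambda>_. (lborel :: (real^4) measure))))"

definition seq_well_defined :: "letter list \<Rightarrow> real^4 \<Rightarrow> bool" where
  "seq_well_defined w z \<longleftrightarrow> seq_integral w z < \<infinity>"

end

theory Submission
  imports Defs
begin

(*
  Put g_k(y) = |y|^-k + |y - e_1|^-k (external_potential k). Integrating out the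
  vertices one at a time, starting from v_1, the integral over v_1, ..., v_m is at most C g_1(y),
  where y is the position of v_(m+1) (or z). The step rests on two estimates: the letter weight
  of a vertex t times g_1(t) is at most 8 g_3(t), because min (|t|^-1, |t - e_1|^-1) <= 2; and,
  by translation and scaling, the integral of |t - c|^-3 |t - y|^-2 over R^4 is at most a
  constant times |y - c|^-1, the constant being finite since |u|^-3 is integrable near 0,
  |u - e|^-2 near e and |u|^-5 at infinity. The induction starts because a vertex v_1 with
  letter 2 has weight |t|^-2 |t - e_1|^-2 <= 2 g_3(t).

  If the first letter is 0 or 1, the vertex v_1 carries only two propagators, so the
  integrand decays like |t|^-4 as v_1 = t goes to infinity. This is not integrable on R^4, as the
  integral of |t|^-4 outside a ball is invariant under scaling. Every further integration keeps
  the value infinity because the remaining weights are positive almost everywhere.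
*)

section \<open>Integrals of inverse powers of the norm\<close>

lemma nn_integral_lborel_affine:
  fixes f :: "'a::euclidean_space \<Rightarrow> ennreal"
  assumes [measurable]: "f \<in> borel_measurable borel" and "c \<noteq> 0"
  shows "(\<integral>\<^sup>+x. f x \<partial>lborel)
    = ennreal (\<bar>c\<bar> ^ DIM('a)) * (\<integral>\<^sup>+x. f (t + c *\<^sub>R x) \<partial>lborel)"
  by (subst lborel_affine[OF assms(2), of t])
    (simp add: nn_integral_density nn_integral_distr nn_integral_cmult)

lemma nn_integral_lborel_translate:
  fixes f :: "'a::euclidean_space \<Rightarrow> ennreal"
  assumes "f \<in> borel_measurable borel"
  shows "(\<integral>\<^sup>+x. f (x + t) \<partial>lborel) = (\<integral>\<^sup>+x. f x \<partial>lborel)"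
  using nn_integral_lborel_affine[OF assms, of 1 t] by (simp add: add.commute)

lemma cball_borel [measurable]: "cball c r \<in> sets borel"
  by (simp add: borel_closed)

lemma ball_borel [measurable]: "ball c r \<in> sets borel"
  by (simp add: borel_open)

lemma ex_power_two_bracket:
  fixes x :: real
  assumes "1 \<le> x"
  obtains j :: nat where "2 ^ j \<le> x" "x < 2 ^ Suc j"
proof -
  have "1 \<le> nat \<lfloor>x\<rfloor>" using assms by linarith
  then obtain j where j: "2 ^ j \<le> nat \<lfloor>x\<rfloor>" "nat \<lfloor>x\<rfloor> < (2::nat) ^ Suc j"
    using ex_power_ivl1[of 2 "nat \<lfloor>x\<rfloor>"] by auto
  have "(2::real) ^ j \<le> real (nat \<lfloor>x\<rfloor>)" using j(1) by (metis of_nat_le_iff of_nat_numeral of_nat_power)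
  moreover have "real (nat \<lfloor>x\<rfloor>) + 1 \<le> 2 ^ Suc j"
    using j(2) by (metis Suc_leI of_nat_Suc of_nat_le_iff of_nat_numeral of_nat_power add.commute)
  moreover have "real (nat \<lfloor>x\<rfloor>) \<le> x" "x < real (nat \<lfloor>x\<rfloor>) + 1"
    using assms by linarith+
  ultimately show ?thesis by (intro that[of j]) linarith+
qed

lemma nn_integral_le_suminf_cball:
  fixes f :: "'a::euclidean_space \<Rightarrow> ennreal"
  assumes bracket: "\<And>x. f x \<noteq> 0 \<Longrightarrow> \<exists>j. norm x \<le> r j \<and> f x \<le> ennreal (c j)"
    and "\<And>j. 0 \<le> c j" and "\<And>j. 0 \<le> r j"
  shows "(\<integral>\<^sup>+x. f x \<partial>lborel) \<le> (\<Sum>j. ennreal (c j * unit_ball_vol DIM('a) * r j ^ DIM('a)))"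
proof -
  have term_le_suminf: "g j \<le> (\<Sum>i. g i)" for g :: "nat \<Rightarrow> ennreal" and j
    by (rule order_trans[OF _ sum_le_suminf[OF summableI, of "{j}"]]) auto
  have "f x \<le> (\<Sum>j. ennreal (c j) * indicator (cball 0 (r j)) x)" for x
  proof (cases "f x = 0")
    case False
    then obtain j where "norm x \<le> r j" "f x \<le> ennreal (c j)" using bracket by blast
    then have "f x \<le> ennreal (c j) * indicator (cball 0 (r j)) x" by (simp add: indicator_def)
    also have "\<dots> \<le> (\<Sum>j. ennreal (c j) * indicator (cball 0 (r j)) x)"
      by (rule term_le_suminf)
    finally show ?thesis .
  qed simp
  then have "(\<integral>\<^sup>+x. f x \<partial>lborel)
      \<le> (\<integral>\<^sup>+x. (\<Sum>j. ennreal (c j) * indicator (cball (0::'a) (r j)) x) \<partial>lborel)"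
    by (intro nn_integral_mono)
  also have "\<dots> = (\<Sum>j. ennreal (c j) * emeasure lborel (cball (0::'a) (r j)))"
    by (subst nn_integral_suminf) (simp_all add: nn_integral_cmult_indicator)
  also have "\<dots> = (\<Sum>j. ennreal (c j * unit_ball_vol DIM('a) * r j ^ DIM('a)))"
    using assms(2,3) by (simp add: emeasure_cball ennreal_mult' mult.assoc)
  finally show ?thesis .
qed

lemma suminf_ennreal_geometric_less_top:
  fixes a q :: real
  assumes "0 \<le> a" "0 \<le> q" "q < 1"
  shows "(\<Sum>j. ennreal (a * q ^ j)) < \<infinity>"
proof -
  have "summable (\<lambda>j. a * q ^ j)" using assms by (intro summable_mult summable_geometric) auto
  then show ?thesis using assms by (simp add: less_top ennreal_suminf_neq_top)
qed

lemma nn_integral_inverse_norm_power_cball_finite: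
  assumes "k < DIM('a)"
  shows "(\<integral>\<^sup>+x. indicator (cball 0 1) x * ennreal (inverse (norm x ^ k))
           \<partial>(lborel :: 'a::euclidean_space measure)) < \<infinity>"
proof -
  define q :: real where "q = (1/2) ^ (DIM('a) - k)"
  have "(\<integral>\<^sup>+x. indicator (cball 0 1) x * ennreal (inverse (norm x ^ k)) \<partial>(lborel :: 'a measure))
      \<le> (\<Sum>j. ennreal ((2 ^ Suc j) ^ k * unit_ball_vol DIM('a) * ((1/2) ^ j) ^ DIM('a)))"
  proof (rule nn_integral_le_suminf_cball)
    fix x :: 'a
    assume "indicator (cball 0 1) x * ennreal (inverse (norm x ^ k)) \<noteq> 0"
    then have x: "norm x \<le> 1" by (auto simp: indicator_def)
    show "\<exists>j. norm x \<le> (1/2) ^ j \<and>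
        indicator (cball 0 1) x * ennreal (inverse (norm x ^ k)) \<le> ennreal ((2 ^ Suc j) ^ k)"
    proof (cases "x = 0")
      case True
      then show ?thesis by (intro exI[of _ 0]) (cases k, auto)
    next
      case False
      then have "1 \<le> 1 / norm x" using x by simp
      then obtain j where j: "2 ^ j \<le> 1 / norm x" "1 / norm x < 2 ^ Suc j"
        by (rule ex_power_two_bracket)
      have "norm x \<le> (1/2) ^ j" using j(1) False by (simp add: field_simps power_one_over)
      moreover have "inverse (norm x ^ k) \<le> (2 ^ Suc j) ^ k"
        using j(2) by (simp add: power_inverse[symmetric] divide_inverse power_mono del: power_Suc)
      ultimately show ?thesis using x by (intro exI[of _ j]) (simp add: ennreal_leI del: power_Suc)
    qed
  qed auto
  also have "\<dots> = (\<Sum>j. ennreal (2 ^ k * unit_ball_vol DIM('a) * q ^ j))"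
  proof -
    have swap: "(a ^ m) ^ n = (a ^ n) ^ m" for a :: real and m n
      by (simp only: power_mult[symmetric] mult.commute)
    have q: "(2::real) ^ k * (1/2) ^ DIM('a) = q"
      using assms by (simp add: q_def power_one_over power_diff)
    have "(2 ^ Suc j) ^ k * ((1/2) ^ j) ^ DIM('a) = 2 ^ k * ((2::real) ^ k * (1/2) ^ DIM('a)) ^ j" for j
      by (simp only: power_Suc power_mult_distrib swap mult.assoc)
    then show ?thesis by (simp only: q mult.commute mult.left_commute)
  qed
  also have "\<dots> < \<infinity>"
    using assms by (intro suminf_ennreal_geometric_less_top) (simp_all add: q_def power_less_one_iff)
  finally show ?thesis .
qed

lemma nn_integral_inverse_norm_power_outside_ball_finite:
  assumes "DIM('a) < k"
  shows "(\<integral>\<^sup>+x. indicator (- ball 0 1) x * ennreal (inverse (norm x ^ k))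
           \<partial>(lborel :: 'a::euclidean_space measure)) < \<infinity>"
proof -
  define q :: real where "q = (1/2) ^ (k - DIM('a))"
  have "(\<integral>\<^sup>+x. indicator (- ball 0 1) x * ennreal (inverse (norm x ^ k)) \<partial>(lborel :: 'a measure))
      \<le> (\<Sum>j. ennreal (((1/2) ^ j) ^ k * unit_ball_vol DIM('a) * (2 ^ Suc j) ^ DIM('a)))"
  proof (rule nn_integral_le_suminf_cball)
    fix x :: 'a
    assume "indicator (- ball 0 1) x * ennreal (inverse (norm x ^ k)) \<noteq> 0"
    then have x: "1 \<le> norm x" by (auto simp: indicator_def)
    then obtain j where j: "2 ^ j \<le> norm x" "norm x < 2 ^ Suc j"
      by (rule ex_power_two_bracket)
    have "inverse (norm x ^ k) \<le> inverse ((2 ^ j) ^ k)"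
      using j(1) by (intro le_imp_inverse_le power_mono) auto
    also have "\<dots> = ((1/2) ^ j) ^ k" by (simp add: power_one_over inverse_eq_divide)
    finally have "inverse (norm x ^ k) \<le> ((1/2) ^ j) ^ k" .
    then show "\<exists>j. norm x \<le> 2 ^ Suc j \<and>
        indicator (- ball 0 1) x * ennreal (inverse (norm x ^ k)) \<le> ennreal (((1/2) ^ j) ^ k)"
      using x j(2) by (intro exI[of _ j]) (simp add: ennreal_leI del: power_Suc)
  qed auto
  also have "\<dots> = (\<Sum>j. ennreal (2 ^ DIM('a) * unit_ball_vol DIM('a) * q ^ j))"
  proof -
    have swap: "(a ^ m) ^ n = (a ^ n) ^ m" for a :: real and m n
      by (simp only: power_mult[symmetric] mult.commute)
    have q: "(1/2::real) ^ k * 2 ^ DIM('a) = q"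
      using assms by (simp add: q_def power_one_over power_diff)
    have "((1/2) ^ j) ^ k * (2 ^ Suc j) ^ DIM('a) = 2 ^ DIM('a) * ((1/2::real) ^ k * 2 ^ DIM('a)) ^ j" for j
      by (simp only: power_Suc power_mult_distrib swap mult.assoc mult.left_commute)
    then have "((1/2) ^ j) ^ k * unit_ball_vol DIM('a) * (2 ^ Suc j) ^ DIM('a)
        = 2 ^ DIM('a) * unit_ball_vol DIM('a) * q ^ j" for j
      unfolding q by (metis mult.commute mult.left_commute)
    then show ?thesis by (simp only:)
  qed
  also have "\<dots> < \<infinity>"
    using assms by (intro suminf_ennreal_geometric_less_top) (simp_all add: q_def power_less_one_iff)
  finally show ?thesis .
qed

lemma nn_integral_inverse_norm_power_outside_ball_scale:
  assumes "0 < c"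
  shows "(\<integral>\<^sup>+x. indicator (- ball 0 (c * R)) x * ennreal (inverse (norm x ^ DIM('a)))
           \<partial>(lborel :: 'a::euclidean_space measure))
       = (\<integral>\<^sup>+x. indicator (- ball 0 R) x * ennreal (inverse (norm x ^ DIM('a))) \<partial>(lborel :: 'a measure))"
proof -
  let ?n = "DIM('a)"
  define J where "J r = (\<integral>\<^sup>+x. indicator (- ball 0 r) x * ennreal (inverse (norm x ^ ?n))
      \<partial>(lborel :: 'a measure))" for r
  have "J (c * R) = ennreal (c ^ ?n) * (\<integral>\<^sup>+x. indicator (- ball 0 (c * R)) (c *\<^sub>R x)
      * ennreal (inverse (norm (c *\<^sub>R x) ^ ?n)) \<partial>(lborel :: 'a measure))"
    unfolding J_def using assms by (subst nn_integral_lborel_affine[of _ c 0]) simp_all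
  also have "\<dots> = ennreal (c ^ ?n) * (ennreal (inverse (c ^ ?n)) * J R)"
  proof -
    have scaled: "indicator (- ball 0 (c * R)) (c *\<^sub>R x) * ennreal (inverse (norm (c *\<^sub>R x) ^ ?n))
        = ennreal (inverse (c ^ ?n)) * (indicator (- ball 0 R) x * ennreal (inverse (norm x ^ ?n)))" for x :: 'a
      using assms by (simp add: indicator_def power_mult_distrib ennreal_mult')
    have "(\<integral>\<^sup>+x. indicator (- ball 0 (c * R)) (c *\<^sub>R x) * ennreal (inverse (norm (c *\<^sub>R x) ^ ?n))
        \<partial>(lborel :: 'a measure)) = ennreal (inverse (c ^ ?n)) * J R"
      unfolding J_def scaled by (rule nn_integral_cmult) measurable
    then show ?thesis by (simp only:)
  qed
  also have "\<dots> = J R"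
    using assms by (simp add: mult.assoc[symmetric] ennreal_mult[symmetric])
  finally show ?thesis unfolding J_def .
qed

lemma nn_integral_inverse_norm_power_outside_ball_infinite:
  assumes "0 < R"
  shows "(\<integral>\<^sup>+x. indicator (- ball 0 R) x * ennreal (inverse (norm x ^ DIM('a)))
           \<partial>(lborel :: 'a::euclidean_space measure)) = \<infinity>"
proof -
  let ?n = "DIM('a)" and ?V = "unit_ball_vol DIM('a)"
  define J where "J r = (\<integral>\<^sup>+x. indicator (- ball 0 r) x * ennreal (inverse (norm x ^ ?n))
      \<partial>(lborel :: 'a measure))" for r
  define A where "A = (\<integral>\<^sup>+x. indicator (ball 0 (2 * R) - ball 0 R) x * ennreal (inverse (norm x ^ ?n))
      \<partial>(lborel :: 'a measure))"
  have "J R = A + J (2 * R)"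
  proof -
    have split_ind: "indicator (- ball 0 R) x
        = (indicator (ball 0 (2 * R) - ball 0 R) x + indicator (- ball 0 (2 * R)) x :: ennreal)" for x :: 'a
      using assms by (simp add: indicator_def)
    show ?thesis unfolding J_def A_def
      by (simp only: split_ind distrib_right) (rule nn_integral_add; measurable)
  qed
  also have "J (2 * R) = J R"
    unfolding J_def by (rule nn_integral_inverse_norm_power_outside_ball_scale) simp
  finally have J: "J R = A + J R" .
  have "0 < A"
  proof -
    have "norm x < 2 * R \<Longrightarrow> R \<le> norm x \<Longrightarrow> inverse ((2 * R) ^ ?n) \<le> inverse (norm x ^ ?n)" for x :: 'a
      using assms by (intro le_imp_inverse_le power_mono zero_less_power) auto
    then have "ennreal (inverse ((2 * R) ^ ?n)) * indicator (ball 0 (2 * R) - ball 0 R) x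
        \<le> indicator (ball 0 (2 * R) - ball 0 R) x * ennreal (inverse (norm x ^ ?n))" for x :: 'a
      by (auto simp: indicator_def ennreal_leI simp del: power_mult_distrib)
    then have le_A: "ennreal (inverse ((2 * R) ^ ?n)) * emeasure lborel (ball 0 (2 * R) - ball (0::'a) R) \<le> A"
      unfolding A_def by (subst nn_integral_cmult_indicator[symmetric]) (auto intro: nn_integral_mono)
    have "emeasure lborel (ball 0 (2 * R) - ball (0::'a) R) = ennreal (?V * (2 * R) ^ ?n - ?V * R ^ ?n)"
      using assms by (subst emeasure_Diff) (auto simp: emeasure_ball ennreal_minus)
    moreover have "?V * R ^ ?n < ?V * (2 * R) ^ ?n"
      using assms by (intro mult_strict_left_mono power_strict_mono) auto
    ultimately have "0 < ennreal (inverse ((2 * R) ^ ?n)) * emeasure lborel (ball 0 (2 * R) - ball (0::'a) R)"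
      using assms by (simp add: ennreal_zero_less_mult_iff del: power_mult_distrib)
    then show ?thesis using le_A by (rule less_le_trans)
  qed
  with J have "J R = \<infinity>"
    by (metis add.commute ennreal_add_left_cancel add_0_right less_irrefl)
  then show ?thesis unfolding J_def .
qed

section \<open>A convolution estimate in R^4\<close>

lemma inverse_power_product_le:
  fixes a b :: real
  assumes "0 < a" "0 < b" "a \<le> b + 1" "1 \<le> a + b"
  shows "inverse (a ^ 3) * inverse (b ^ 2)
    \<le> 4 * (if a \<le> 1 then inverse (a ^ 3) else 0) + 8 * (if b \<le> 1 then inverse (b ^ 3) else 0)
      + 32 * (if a \<le> 2 then 1 else 0) + 4 * (if 1 \<le> a then inverse (a ^ 5) else 0)"
proof -
  have inverse_power_le: "inverse (y ^ n) \<le> inverse (x ^ n)" if "0 < x" "x \<le> y" for x y :: real and n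
    using that by (intro le_imp_inverse_le power_mono) auto
  have terms_nonneg: "0 \<le> (if a \<le> 1 then inverse (a ^ 3) else 0)" "0 \<le> (if b \<le> 1 then inverse (b ^ 3) else 0)"
    "0 \<le> (if a \<le> 2 then 1 else 0::real)" "0 \<le> (if 1 \<le> a then inverse (a ^ 5) else 0)"
    using assms by simp_all
  consider "a \<le> 1/2" | "1/2 < a" "b \<le> 1/2" | "1/2 < a" "1/2 < b" "a \<le> 2" | "2 < a"
    by linarith
  then show ?thesis
  proof cases
    case 1
    then have "inverse (b ^ 2) \<le> inverse ((1/2) ^ 2)" using assms by (intro inverse_power_le) auto
    then have "inverse (a ^ 3) * inverse (b ^ 2) \<le> inverse (a ^ 3) * 4"
      using assms by (intro mult_left_mono) (auto simp: power_one_over)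
    then show ?thesis using 1 terms_nonneg by auto
  next
    case 2
    have "inverse (a ^ 3) \<le> inverse ((1/2) ^ 3)" using 2 by (intro inverse_power_le) auto
    moreover have "inverse (b ^ 2) \<le> inverse (b ^ 3)"
      using 2 assms by (intro le_imp_inverse_le power_decreasing) auto
    ultimately have "inverse (a ^ 3) * inverse (b ^ 2) \<le> 8 * inverse (b ^ 3)"
      using assms by (intro mult_mono) (auto simp: power_one_over)
    then show ?thesis using 2 terms_nonneg by auto
  next
    case 3
    have "inverse (a ^ 3) \<le> inverse ((1/2) ^ 3)" "inverse (b ^ 2) \<le> inverse ((1/2) ^ 2)"
      using 3 by (intro inverse_power_le; simp)+
    then have "inverse (a ^ 3) * inverse (b ^ 2) \<le> 8 * 4"
      using assms by (intro mult_mono) (auto simp: power_one_over)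
    then show ?thesis using 3 terms_nonneg by auto
  next
    case 4
    then have "inverse (b ^ 2) \<le> inverse ((a / 2) ^ 2)" using assms by (intro inverse_power_le) auto
    then have "inverse (a ^ 3) * inverse (b ^ 2) \<le> inverse (a ^ 3) * inverse ((a / 2) ^ 2)"
      using assms by (intro mult_left_mono) auto
    also have "\<dots> = 4 * inverse (a ^ 5)"
      by (simp add: power_divide field_simps eval_nat_numeral)
    finally show ?thesis using 4 terms_nonneg by auto
  qed
qed

lemma inverse_norm_product_le_majorant:
  fixes u e :: "'a::real_normed_vector"
  assumes "norm e = 1"
  shows "ennreal (inverse (norm u ^ 3) * inverse (norm (u - e) ^ 2))
    \<le> 4 * (indicator (cball 0 1) u * ennreal (inverse (norm u ^ 3)))
      + 8 * (indicator (cball 0 1) (u - e) * ennreal (inverse (norm (u - e) ^ 3)))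
      + 32 * indicator (cball 0 2) u
      + 4 * (indicator (- ball 0 1) u * ennreal (inverse (norm u ^ 5)))"
proof (cases "u = 0 \<or> u = e")
  case False
  have "norm u \<le> norm (u - e) + 1" "1 \<le> norm u + norm (u - e)"
    using norm_triangle_sub[of u e] norm_triangle_ineq4[of u "u - e"] assms by simp_all
  with False have "ennreal (inverse (norm u ^ 3) * inverse (norm (u - e) ^ 2))
    \<le> ennreal (4 * (if norm u \<le> 1 then inverse (norm u ^ 3) else 0)
      + 8 * (if norm (u - e) \<le> 1 then inverse (norm (u - e) ^ 3) else 0)
      + 32 * (if norm u \<le> 2 then 1 else 0) + 4 * (if 1 \<le> norm u then inverse (norm u ^ 5) else 0))"
    by (intro ennreal_leI inverse_power_product_le) auto
  also have "\<dots> = 4 * (indicator (cball 0 1) u * ennreal (inverse (norm u ^ 3)))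
      + 8 * (indicator (cball 0 1) (u - e) * ennreal (inverse (norm (u - e) ^ 3)))
      + 32 * indicator (cball 0 2) u
      + 4 * (indicator (- ball 0 1) u * ennreal (inverse (norm u ^ 5)))"
    by (simp add: indicator_def ennreal_plus ennreal_mult' not_less)
  finally show ?thesis .
qed auto

lemma nn_integral_unit_convolution_bounded:
  obtains K :: ennreal where "K < \<infinity>"
    and "\<And>e::real^4. norm e = 1 \<Longrightarrow>
      (\<integral>\<^sup>+u. ennreal (inverse (norm u ^ 3) * inverse (norm (u - e) ^ 2)) \<partial>lborel) \<le> K"
proof
  define P where "P = (\<integral>\<^sup>+u. indicator (cball 0 1) u * ennreal (inverse (norm u ^ 3))
    \<partial>(lborel :: (real^4) measure))"
  define Q where "Q = (\<integral>\<^sup>+u. indicator (- ball 0 1) u * ennreal (inverse (norm u ^ 5))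
    \<partial>(lborel :: (real^4) measure))"
  show "4 * P + 8 * P + 32 * emeasure lborel (cball (0::real^4) 2) + 4 * Q < \<infinity>"
    using nn_integral_inverse_norm_power_cball_finite[where 'a="real^4" and k=3]
      nn_integral_inverse_norm_power_outside_ball_finite[where 'a="real^4" and k=5]
    by (simp add: P_def Q_def emeasure_cball ennreal_mult_less_top)
  fix e :: "real^4"
  assume e: "norm e = 1"
  have "(\<integral>\<^sup>+u. ennreal (inverse (norm u ^ 3) * inverse (norm (u - e) ^ 2)) \<partial>lborel)
    \<le> (\<integral>\<^sup>+u. 4 * (indicator (cball 0 1) u * ennreal (inverse (norm u ^ 3)))
      + 8 * (indicator (cball 0 1) (u - e) * ennreal (inverse (norm (u - e) ^ 3)))
      + 32 * indicator (cball 0 2) u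
      + 4 * (indicator (- ball 0 1) u * ennreal (inverse (norm u ^ 5))) \<partial>lborel)"
    using e by (intro nn_integral_mono inverse_norm_product_le_majorant)
  also have "\<dots> = 4 * P + 8 * (\<integral>\<^sup>+u. indicator (cball 0 1) (u - e) * ennreal (inverse (norm (u - e) ^ 3)) \<partial>lborel)
      + 32 * emeasure lborel (cball (0::real^4) 2) + 4 * Q"
    unfolding P_def Q_def
    by ((subst nn_integral_add, measurable, measurable)+, (subst nn_integral_cmult, measurable)+)
  also have "(\<integral>\<^sup>+u. indicator (cball 0 1) (u - e) * ennreal (inverse (norm (u - e) ^ 3)) \<partial>lborel) = P"
  proof -
    have "(\<lambda>u::real^4. indicator (cball 0 1) u * ennreal (inverse (norm u ^ 3))) \<in> borel_measurable borel"
      by measurable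
    from nn_integral_lborel_translate[OF this, of "- e"] show ?thesis unfolding P_def by simp
  qed
  finally show "(\<integral>\<^sup>+u. ennreal (inverse (norm u ^ 3) * inverse (norm (u - e) ^ 2)) \<partial>lborel)
      \<le> 4 * P + 8 * P + 32 * emeasure lborel (cball (0::real^4) 2) + 4 * Q" .
qed

lemma nn_integral_convolution_bounded:
  obtains K :: ennreal where "K < \<infinity>"
    and "\<And>c y :: real^4. y \<noteq> c \<Longrightarrow>
      (\<integral>\<^sup>+x. ennreal (inverse (norm (x - c) ^ 3) * inverse (norm (x - y) ^ 2)) \<partial>lborel)
        \<le> K * ennreal (inverse (norm (y - c)))"
proof -
  obtain K where K: "K < \<infinity>" and unit: "\<And>e::real^4. norm e = 1 \<Longrightarrow>
      (\<integral>\<^sup>+u. ennreal (inverse (norm u ^ 3) * inverse (norm (u - e) ^ 2)) \<partial>lborel) \<le> K"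
    using nn_integral_unit_convolution_bounded by blast
  have "(\<integral>\<^sup>+x. ennreal (inverse (norm (x - c) ^ 3) * inverse (norm (x - y) ^ 2)) \<partial>lborel)
      \<le> K * ennreal (inverse (norm (y - c)))" if "y \<noteq> c" for c y :: "real^4"
  proof -
    define r where "r = norm (y - c)"
    define e where "e = inverse r *\<^sub>R (y - c)"
    have r: "0 < r" using that by (simp add: r_def)
    have e: "norm e = 1" "y = c + r *\<^sub>R e" using r by (simp_all add: e_def r_def)
    have scale: "inverse (norm ((c + r *\<^sub>R u) - c) ^ 3) * inverse (norm ((c + r *\<^sub>R u) - y) ^ 2)
        = inverse (r ^ 5) * (inverse (norm u ^ 3) * inverse (norm (u - e) ^ 2))" for u
    proof -
      have "(c + r *\<^sub>R u) - y = r *\<^sub>R (u - e)" by (simp add: e(2) algebra_simps)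
      then have shift: "norm ((c + r *\<^sub>R u) - y) = r * norm (u - e)" using r by simp
      show ?thesis using r by (simp only: shift) (simp add: power_mult_distrib eval_nat_numeral field_simps)
    qed
    have "(\<lambda>x. ennreal (inverse (norm (x - c) ^ 3) * inverse (norm (x - y) ^ 2))) \<in> borel_measurable borel"
      by measurable
    from nn_integral_lborel_affine[OF this, of r c]
    have "(\<integral>\<^sup>+x. ennreal (inverse (norm (x - c) ^ 3) * inverse (norm (x - y) ^ 2)) \<partial>lborel)
        = ennreal (r ^ 4)
          * (\<integral>\<^sup>+u. ennreal (inverse (r ^ 5) * (inverse (norm u ^ 3) * inverse (norm (u - e) ^ 2))) \<partial>lborel)"
      using r by (simp only: scale) simp
    also have "\<dots> = ennreal (r ^ 4) * (ennreal (inverse (r ^ 5))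
        * (\<integral>\<^sup>+u. ennreal (inverse (norm u ^ 3) * inverse (norm (u - e) ^ 2)) \<partial>lborel))"
    proof -
      have "(\<lambda>u. ennreal (inverse (norm u ^ 3) * inverse (norm (u - e) ^ 2))) \<in> borel_measurable lborel"
        by measurable
      from nn_integral_cmult[OF this, of "ennreal (inverse (r ^ 5))"] show ?thesis
        using r by (simp add: ennreal_mult'[symmetric])
    qed
    also have "\<dots> = ennreal (inverse r)
        * (\<integral>\<^sup>+u. ennreal (inverse (norm u ^ 3) * inverse (norm (u - e) ^ 2)) \<partial>lborel)"
    proof -
      have "r ^ 4 * inverse (r ^ 5) = inverse r" using r by (simp add: field_simps eval_nat_numeral)
      then show ?thesis using r by (simp add: mult.assoc[symmetric] ennreal_mult[symmetric])
    qed
    also have "\<dots> \<le> ennreal (inverse r) * K"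
      by (intro mult_left_mono unit e) simp
    finally show ?thesis by (simp add: r_def mult.commute)
  qed
  with K show ?thesis by (rule that)
qed

section \<open>The sequential integral\<close>

lemma norm_e1 [simp]: "norm e1 = 1"
  by (simp add: e1_def)

lemma propagator_eq: "propagator a b = inverse (norm (a - b) ^ 2)"
  by (simp add: propagator_def inverse_eq_divide)

lemma propagator_nonneg: "0 \<le> propagator a b"
  by (simp add: propagator_def)

lemma letter_weight_nonneg: "0 \<le> letter_weight l x"
  by (cases l) (simp_all add: propagator_nonneg)

lemma propagator_measurable [measurable]:
  "f \<in> borel_measurable M \<Longrightarrow> g \<in> borel_measurable M \<Longrightarrow>
    (\<lambda>x. propagator (f x) (g x)) \<in> borel_measurable M"
  unfolding propagator_def by measurable

lemma letter_weight_measurable [measurable]: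
  "f \<in> borel_measurable M \<Longrightarrow> (\<lambda>x. letter_weight l (f x)) \<in> borel_measurable M"
  by (cases l) simp_all

definition external_potential :: "nat \<Rightarrow> real^4 \<Rightarrow> real" where
  "external_potential k y = inverse (norm y ^ k) + inverse (norm (y - e1) ^ k)"

lemma external_potential_nonneg: "0 \<le> external_potential k y"
  by (simp add: external_potential_def)

lemma external_potential_measurable [measurable]: "external_potential k \<in> borel_measurable borel"
  unfolding external_potential_def by measurable

lemma min_inverse_norm_external_le: "min (inverse (norm y)) (inverse (norm (y - e1))) \<le> 2"
proof -
  have "1 \<le> norm y + norm (y - e1)" using norm_triangle_ineq4[of y "y - e1"] by simp
  then consider "1/2 \<le> norm y" | "1/2 \<le> norm (y - e1)" by linarith
  then show ?thesis
  proof cases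
    case 1
    then have "inverse (norm y) \<le> inverse (1/2)" by (intro le_imp_inverse_le) auto
    then show ?thesis by simp
  next
    case 2
    then have "inverse (norm (y - e1)) \<le> inverse (1/2)" by (intro le_imp_inverse_le) auto
    then show ?thesis by simp
  qed
qed

lemma letter_weight_le_external_potential:
  fixes y :: "real^4"
  shows "external_potential 1 y * letter_weight l y \<le> 8 * external_potential 3 y"
    and "letter_weight L2 y \<le> 2 * external_potential 3 y"
proof -
  define X Y where "X = inverse (norm y)" and "Y = inverse (norm (y - e1))"
  define M m where "M = max X Y" and "m = min X Y"
  have "0 \<le> m" "m \<le> M" by (simp_all add: X_def Y_def M_def m_def)
  have "M * m = X * Y" by (simp add: M_def m_def max_def min_def)
  have "m \<le> 2" using min_inverse_norm_external_le[of y] by (simp add: m_def X_def Y_def)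
  have M3: "2 * M ^ 3 \<le> 2 * external_potential 3 y"
    by (simp add: external_potential_def M_def X_def Y_def power_inverse max_def)
  have "X ^ 2 \<le> M ^ 2" "Y ^ 2 \<le> M ^ 2" by (auto simp: M_def X_def Y_def intro!: power_mono)
  have weight: "letter_weight a y \<le> M ^ 2 * (if a = L2 then m ^ 2 else 1)" for a
  proof (cases a)
    case L0
    then have "letter_weight a y = X ^ 2" by (simp add: propagator_eq X_def power_inverse)
    with L0 \<open>X ^ 2 \<le> M ^ 2\<close> show ?thesis by simp
  next
    case L1
    then have "letter_weight a y = Y ^ 2" by (simp add: propagator_eq Y_def power_inverse)
    with L1 \<open>Y ^ 2 \<le> M ^ 2\<close> show ?thesis by simp
  next
    case L2
    then have "letter_weight a y = (X * Y) ^ 2"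
      by (simp add: propagator_eq X_def Y_def power_mult_distrib power_inverse)
    then show ?thesis using L2 \<open>M * m = X * Y\<close> by (simp add: power_mult_distrib[symmetric])
  qed
  have "M ^ 2 * (if l = L2 then m ^ 2 else 1) \<le> M ^ 2 * 4"
    using \<open>0 \<le> m\<close> \<open>m \<le> 2\<close> power_mono[of m 2 2] by (intro mult_left_mono) auto
  then have "external_potential 1 y * letter_weight l y \<le> (2 * M) * (M ^ 2 * 4)"
    using weight[of l] letter_weight_nonneg[of l y] \<open>0 \<le> m\<close> \<open>m \<le> M\<close>
    by (intro mult_mono) (auto simp: external_potential_def M_def X_def Y_def)
  then show "external_potential 1 y * letter_weight l y \<le> 8 * external_potential 3 y"
    using M3 by (simp add: eval_nat_numeral)
  have "m ^ 2 \<le> 2 * M"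
    using \<open>0 \<le> m\<close> \<open>m \<le> 2\<close> \<open>m \<le> M\<close> mult_mono[of m 2 m M]
    by (simp add: power2_eq_square mult.commute)
  then have "M ^ 2 * m ^ 2 \<le> M ^ 2 * (2 * M)" by (intro mult_left_mono) auto
  then have "letter_weight L2 y \<le> M ^ 2 * (2 * M)"
    using weight[of L2] by simp
  then show "letter_weight L2 y \<le> 2 * external_potential 3 y"
    using M3 by (simp add: eval_nat_numeral)
qed

lemma nn_integral_external_potential_propagator_bounded:
  obtains K :: ennreal where "K < \<infinity>"
    and "\<And>y. y \<noteq> 0 \<Longrightarrow> y \<noteq> e1 \<Longrightarrow>
      (\<integral>\<^sup>+x. ennreal (external_potential 3 x * propagator x y) \<partial>lborel) \<le> K * ennreal (external_potential 1 y)"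
proof -
  obtain K where K: "K < \<infinity>" and conv: "\<And>c y :: real^4. y \<noteq> c \<Longrightarrow>
      (\<integral>\<^sup>+x. ennreal (inverse (norm (x - c) ^ 3) * inverse (norm (x - y) ^ 2)) \<partial>lborel)
        \<le> K * ennreal (inverse (norm (y - c)))"
    using nn_integral_convolution_bounded by blast
  have "(\<integral>\<^sup>+x. ennreal (external_potential 3 x * propagator x y) \<partial>lborel) \<le> K * ennreal (external_potential 1 y)"
    if "y \<noteq> 0" "y \<noteq> e1" for y
  proof -
    have "(\<integral>\<^sup>+x. ennreal (external_potential 3 x * propagator x y) \<partial>lborel)
        = (\<integral>\<^sup>+x. ennreal (inverse (norm (x - 0) ^ 3) * inverse (norm (x - y) ^ 2))
            + ennreal (inverse (norm (x - e1) ^ 3) * inverse (norm (x - y) ^ 2)) \<partial>lborel)"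
      by (intro nn_integral_cong)
        (simp add: external_potential_def propagator_eq distrib_right ennreal_plus)
    also have "\<dots> = (\<integral>\<^sup>+x. ennreal (inverse (norm (x - 0) ^ 3) * inverse (norm (x - y) ^ 2)) \<partial>lborel)
        + (\<integral>\<^sup>+x. ennreal (inverse (norm (x - e1) ^ 3) * inverse (norm (x - y) ^ 2)) \<partial>lborel)"
      by (rule nn_integral_add) measurable
    also have "\<dots> \<le> K * ennreal (inverse (norm (y - 0))) + K * ennreal (inverse (norm (y - e1)))"
      using that by (intro add_mono conv)
    also have "\<dots> = K * ennreal (external_potential 1 y)"
      by (simp add: external_potential_def distrib_left ennreal_plus)
    finally show ?thesis .
  qed
  with K show ?thesis by (rule that)
qed

interpretation lborel4: product_sigma_finite "\<lambda>_::nat. lborel :: (real^4) measure"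
  by unfold_locales

lemma seq_integrand_nonneg: "0 \<le> seq_integrand w y x"
  unfolding seq_integrand_def
  by (intro divide_nonneg_nonneg mult_nonneg_nonneg prod_nonneg letter_weight_nonneg propagator_nonneg) auto

lemma seq_integrand_measurable:
  assumes "w \<noteq> []"
  shows "seq_integrand w y \<in> borel_measurable (PiM {..<length w} (\<lambda>_. lborel :: (real^4) measure))"
proof -
  have [measurable]: "(\<lambda>x. x i) \<in> borel_measurable (PiM {..<length w} (\<lambda>_. lborel :: (real^4) measure))"
    if "i < length w" for i
    using measurable_component_singleton[of i "{..<length w}" "\<lambda>_. lborel :: (real^4) measure"] that
    by (simp add: measurable_lborel2)
  have "length w - 1 < length w" using assms by simp
  then show ?thesis unfolding seq_integrand_def by measurable
qed

lemma seq_integrand_snoc: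
  assumes "v \<noteq> []"
  shows "seq_integrand (v @ [a]) y x
    = seq_integrand v (x (length v)) x * (letter_weight a (x (length v)) * propagator (x (length v)) y / pi ^ 2)"
proof -
  obtain m where "length v = Suc m" using assms by (cases v) auto
  then show ?thesis
    by (simp add: seq_integrand_def nth_append lessThan_Suc power_add power2_eq_square algebra_simps)
qed

lemma seq_integrand_cong:
  assumes "\<And>i. i < length w \<Longrightarrow> x i = x' i" and "w \<noteq> []"
  shows "seq_integrand w y x = seq_integrand w y x'"
  using assms unfolding seq_integrand_def by (intro arg_cong2[where f="(/)"] arg_cong2[where f="(*)"] prod.cong) auto

lemma seq_integral_singleton:
  "seq_integral [a] y = (\<integral>\<^sup>+t. ennreal (letter_weight a t * propagator t y / pi ^ 2) \<partial>lborel)"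
proof -
  have "seq_integral [a] y
      = (\<integral>\<^sup>+x. ennreal (letter_weight a (x 0) * propagator (x 0) y / pi ^ 2)
          \<partial>PiM {0::nat} (\<lambda>_. lborel :: (real^4) measure))"
    by (simp add: seq_integral_def seq_integrand_def lessThan_Suc)
  also have "\<dots> = (\<integral>\<^sup>+t. ennreal (letter_weight a t * propagator t y / pi ^ 2) \<partial>lborel)"
    by (rule lborel4.product_nn_integral_singleton) measurable
  finally show ?thesis .
qed

lemma seq_integral_snoc:
  assumes "v \<noteq> []"
  shows "seq_integral (v @ [a]) y
    = (\<integral>\<^sup>+t. seq_integral v t * ennreal (letter_weight a t * propagator t y / pi ^ 2) \<partial>lborel)"
proof -
  let ?n = "length v"
  have index_set: "{..<length (v @ [a])} = insert ?n {..<?n}" by auto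
  then have "seq_integral (v @ [a]) y
      = (\<integral>\<^sup>+x. ennreal (seq_integrand (v @ [a]) y x) \<partial>PiM (insert ?n {..<?n}) (\<lambda>_. lborel))"
    by (simp add: seq_integral_def)
  also have "\<dots> = (\<integral>\<^sup>+t. (\<integral>\<^sup>+x. ennreal (seq_integrand (v @ [a]) y (x(?n := t)))
      \<partial>PiM {..<?n} (\<lambda>_. lborel)) \<partial>lborel)"
    using seq_integrand_measurable[of "v @ [a]" y] index_set
    by (intro lborel4.product_nn_integral_insert_rev) auto
  also have "\<dots> = (\<integral>\<^sup>+t. seq_integral v t * ennreal (letter_weight a t * propagator t y / pi ^ 2) \<partial>lborel)"
  proof (intro nn_integral_cong)
    fix t :: "real^4"
    have "ennreal (seq_integrand (v @ [a]) y (x(?n := t)))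
        = ennreal (seq_integrand v t x) * ennreal (letter_weight a t * propagator t y / pi ^ 2)" for x
    proof -
      have "seq_integrand (v @ [a]) y (x(?n := t))
          = seq_integrand v t x * (letter_weight a t * propagator t y / pi ^ 2)"
        using seq_integrand_snoc[OF assms, of a y "x(?n := t)"] seq_integrand_cong[of v "x(?n := t)" x t] assms
        by simp
      then show ?thesis by (simp only: ennreal_mult'[OF seq_integrand_nonneg])
    qed
    then have "(\<integral>\<^sup>+x. ennreal (seq_integrand (v @ [a]) y (x(?n := t))) \<partial>PiM {..<?n} (\<lambda>_. lborel))
        = (\<integral>\<^sup>+x. ennreal (seq_integrand v t x) * ennreal (letter_weight a t * propagator t y / pi ^ 2)
            \<partial>PiM {..<?n} (\<lambda>_. lborel))"
      by simp
    also have "\<dots> = seq_integral v t * ennreal (letter_weight a t * propagator t y / pi ^ 2)"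
      unfolding seq_integral_def
      by (intro nn_integral_multc measurable_compose[OF seq_integrand_measurable[OF assms] measurable_ennreal])
    finally show "(\<integral>\<^sup>+x. ennreal (seq_integrand (v @ [a]) y (x(?n := t))) \<partial>PiM {..<?n} (\<lambda>_. lborel))
        = seq_integral v t * ennreal (letter_weight a t * propagator t y / pi ^ 2)" .
  qed
  finally show ?thesis .
qed

lemma AE_not_external_vertex: "AE t in lborel. t \<noteq> 0 \<and> t \<noteq> e1"
  using AE_lborel_singleton[of 0] AE_lborel_singleton[of e1] by eventually_elim auto

lemma nn_integral_dominated_propagator_bounded:
  obtains K :: ennreal where "K < \<infinity>"
    and "\<And>f c y. (\<And>t. f t \<le> c * external_potential 3 t) \<Longrightarrow> 0 \<le> c \<Longrightarrow> y \<noteq> 0 \<Longrightarrow> y \<noteq> e1 \<Longrightarrow>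
      (\<integral>\<^sup>+t. ennreal (f t * propagator t y / pi ^ 2) \<partial>lborel) \<le> ennreal c * K * ennreal (external_potential 1 y)"
proof -
  obtain K where K: "K < \<infinity>" and bound: "\<And>y. y \<noteq> 0 \<Longrightarrow> y \<noteq> e1 \<Longrightarrow>
      (\<integral>\<^sup>+x. ennreal (external_potential 3 x * propagator x y) \<partial>lborel) \<le> K * ennreal (external_potential 1 y)"
    using nn_integral_external_potential_propagator_bounded by blast
  have "(\<integral>\<^sup>+t. ennreal (f t * propagator t y / pi ^ 2) \<partial>lborel)
      \<le> ennreal c * (ennreal (1 / pi ^ 2) * K) * ennreal (external_potential 1 y)"
    if f: "\<And>t. f t \<le> c * external_potential 3 t" and "0 \<le> c" "y \<noteq> 0" "y \<noteq> e1"
    for f :: "real^4 \<Rightarrow> real" and c y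
  proof -
    have "f t * propagator t y / pi ^ 2 \<le> c / pi ^ 2 * (external_potential 3 t * propagator t y)" for t
      using mult_right_mono[OF f propagator_nonneg] by (simp add: divide_right_mono field_simps)
    then have "(\<integral>\<^sup>+t. ennreal (f t * propagator t y / pi ^ 2) \<partial>lborel)
        \<le> (\<integral>\<^sup>+t. ennreal (c / pi ^ 2) * ennreal (external_potential 3 t * propagator t y) \<partial>lborel)"
      using \<open>0 \<le> c\<close> by (intro nn_integral_mono) (simp add: ennreal_mult'[symmetric] ennreal_leI)
    also have "\<dots> = ennreal (c / pi ^ 2) * (\<integral>\<^sup>+t. ennreal (external_potential 3 t * propagator t y) \<partial>lborel)"
      by (rule nn_integral_cmult) measurable
    also have "\<dots> \<le> ennreal (c / pi ^ 2) * (K * ennreal (external_potential 1 y))"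
      using that by (intro mult_left_mono bound) auto
    also have "ennreal (c / pi ^ 2) = ennreal c * ennreal (1 / pi ^ 2)"
      using \<open>0 \<le> c\<close> by (simp add: ennreal_mult'[symmetric])
    finally show ?thesis by (simp only: mult.assoc)
  qed
  moreover have "ennreal (1 / pi ^ 2) * K < \<infinity>" using K by (simp add: ennreal_mult_less_top)
  ultimately show ?thesis using that by blast
qed

lemma seq_integral_snoc_le:
  assumes "v \<noteq> []"
    and IH: "\<And>t. t \<noteq> 0 \<Longrightarrow> t \<noteq> e1 \<Longrightarrow> seq_integral v t \<le> C * ennreal (external_potential 1 t)"
  shows "seq_integral (v @ [a]) y
    \<le> C * (\<integral>\<^sup>+t. ennreal (external_potential 1 t * letter_weight a t * propagator t y / pi ^ 2) \<partial>lborel)"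
proof -
  have "seq_integral (v @ [a]) y
      = (\<integral>\<^sup>+t. seq_integral v t * ennreal (letter_weight a t * propagator t y / pi ^ 2) \<partial>lborel)"
    by (rule seq_integral_snoc[OF assms(1)])
  also have "\<dots> \<le> (\<integral>\<^sup>+t. C * ennreal (external_potential 1 t * letter_weight a t * propagator t y / pi ^ 2) \<partial>lborel)"
  proof (rule nn_integral_mono_AE)
    show "AE t in lborel. seq_integral v t * ennreal (letter_weight a t * propagator t y / pi ^ 2)
        \<le> C * ennreal (external_potential 1 t * letter_weight a t * propagator t y / pi ^ 2)"
      using AE_not_external_vertex
    proof eventually_elim
      case (elim t)
      then have "seq_integral v t * ennreal (letter_weight a t * propagator t y / pi ^ 2)
          \<le> C * ennreal (external_potential 1 t) * ennreal (letter_weight a t * propagator t y / pi ^ 2)"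
        by (intro mult_right_mono IH) auto
      also have "\<dots> = C * ennreal (external_potential 1 t * letter_weight a t * propagator t y / pi ^ 2)"
        by (simp add: mult.assoc ennreal_mult'[symmetric] external_potential_nonneg)
      finally show ?case .
    qed
  qed
  also have "\<dots> = C * (\<integral>\<^sup>+t. ennreal (external_potential 1 t * letter_weight a t * propagator t y / pi ^ 2) \<partial>lborel)"
    by (rule nn_integral_cmult) measurable
  finally show ?thesis .
qed

lemma seq_integral_le_external_potential:
  assumes "w \<noteq> []" and "hd w = L2"
  obtains C :: ennreal where "C < \<infinity>"
    and "\<And>y. y \<noteq> 0 \<Longrightarrow> y \<noteq> e1 \<Longrightarrow> seq_integral w y \<le> C * ennreal (external_potential 1 y)"
proof -
  obtain K where K: "K < \<infinity>" and last_vertex: "\<And>f c y. (\<And>t. f t \<le> c * external_potential 3 t) \<Longrightarrow>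
      0 \<le> c \<Longrightarrow> y \<noteq> 0 \<Longrightarrow> y \<noteq> e1 \<Longrightarrow>
      (\<integral>\<^sup>+t. ennreal (f t * propagator t y / pi ^ 2) \<partial>lborel) \<le> ennreal c * K * ennreal (external_potential 1 y)"
    using nn_integral_dominated_propagator_bounded by blast
  have "\<exists>C<\<infinity>. \<forall>y. y \<noteq> 0 \<longrightarrow> y \<noteq> e1 \<longrightarrow> seq_integral w y \<le> C * ennreal (external_potential 1 y)"
    using assms
  proof (induction w rule: rev_induct)
    case (snoc a v)
    show ?case
    proof (cases "v = []")
      case True
      with snoc.prems have "a = L2" by simp
      have "seq_integral [L2] y \<le> 2 * K * ennreal (external_potential 1 y)" if "y \<noteq> 0" "y \<noteq> e1" for y
        unfolding seq_integral_singleton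
        using last_vertex[OF letter_weight_le_external_potential(2)] that by simp
      moreover have "2 * K < \<infinity>" using K by (simp add: ennreal_mult_less_top)
      ultimately show ?thesis using True \<open>a = L2\<close> by auto
    next
      case False
      with snoc obtain C where "C < \<infinity>"
        and IH: "\<And>t. t \<noteq> 0 \<Longrightarrow> t \<noteq> e1 \<Longrightarrow> seq_integral v t \<le> C * ennreal (external_potential 1 t)"
        by auto
      have "seq_integral (v @ [a]) y \<le> C * (8 * K) * ennreal (external_potential 1 y)"
        if "y \<noteq> 0" "y \<noteq> e1" for y
      proof -
        have "seq_integral (v @ [a]) y
            \<le> C * (\<integral>\<^sup>+t. ennreal (external_potential 1 t * letter_weight a t * propagator t y / pi ^ 2) \<partial>lborel)"
          by (rule seq_integral_snoc_le[OF False IH])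
        also have "\<dots> \<le> C * (8 * K * ennreal (external_potential 1 y))"
          using last_vertex[OF letter_weight_le_external_potential(1)] that by (intro mult_left_mono) simp_all
        finally show ?thesis by (simp add: mult.assoc)
      qed
      moreover have "C * (8 * K) < \<infinity>" using \<open>C < \<infinity>\<close> K by (simp add: ennreal_mult_less_top)
      ultimately show ?thesis by blast
    qed
  qed simp
  then show ?thesis using that by blast
qed

lemma propagator_ge:
  assumes "t \<noteq> p" and "norm (t - p) \<le> d"
  shows "inverse (d ^ 2) \<le> propagator t p"
  unfolding propagator_eq using assms by (intro le_imp_inverse_le power_mono) auto

lemma letter_weight_propagator_ge:
  assumes "l \<noteq> L2" and t: "norm y + 2 \<le> norm t"
  shows "inverse (16 * norm t ^ 4) \<le> letter_weight l t * propagator t y"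
proof -
  have "1 < norm t" "norm y < norm t" using t norm_ge_zero[of y] by linarith+
  then have ne: "t \<noteq> 0" "t \<noteq> e1" "t \<noteq> y" by auto
  have "inverse ((2 * norm t) ^ 2) \<le> letter_weight l t"
  proof (cases l)
    case L0
    show ?thesis unfolding L0 letter_weight.simps using t ne by (intro propagator_ge) auto
  next
    case L1
    have "norm (t - e1) \<le> 2 * norm t" using norm_triangle_ineq4[of t e1] \<open>1 < norm t\<close> by simp
    with ne show ?thesis unfolding L1 letter_weight.simps by (intro propagator_ge) auto
  qed (use assms in simp)
  moreover have "inverse ((2 * norm t) ^ 2) \<le> propagator t y"
    using norm_triangle_ineq4[of t y] t ne by (intro propagator_ge) auto
  ultimately have "inverse ((2 * norm t) ^ 2) * inverse ((2 * norm t) ^ 2) \<le> letter_weight l t * propagator t y"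
    by (intro mult_mono) (auto simp: letter_weight_nonneg)
  then show ?thesis by (simp add: field_simps eval_nat_numeral)
qed

lemma nn_integral_letter_propagator_infinite:
  assumes "l \<noteq> L2"
  shows "(\<integral>\<^sup>+t. ennreal (letter_weight l t * propagator t y / pi ^ 2) \<partial>lborel) = \<infinity>"
proof -
  define R where "R = 2 * norm y + 4"
  have R: "0 < R" by (simp add: R_def add_nonneg_pos)
  define c where "c = inverse (16 * pi ^ 2)"
  have "0 < c" by (simp add: c_def)
  have lower: "indicator (- ball 0 R) t * ennreal (c * inverse (norm t ^ 4))
      \<le> ennreal (letter_weight l t * propagator t y / pi ^ 2)" for t :: "real^4"
  proof (cases "R \<le> norm t")
    case True
    then have "norm y + 2 \<le> norm t" using norm_ge_zero[of y] unfolding R_def by linarith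
    with assms have "inverse (16 * norm t ^ 4) / pi ^ 2 \<le> letter_weight l t * propagator t y / pi ^ 2"
      by (intro divide_right_mono letter_weight_propagator_ge) auto
    then show ?thesis using True by (simp add: c_def ennreal_leI field_simps)
  qed simp
  have "\<infinity> = ennreal c
      * (\<integral>\<^sup>+t. indicator (- ball 0 R) t * ennreal (inverse (norm t ^ 4)) \<partial>(lborel :: (real^4) measure))"
    using nn_integral_inverse_norm_power_outside_ball_infinite[OF R, where 'a="real^4"] \<open>0 < c\<close> by simp
  also have "\<dots> = (\<integral>\<^sup>+t. indicator (- ball 0 R) t * ennreal (c * inverse (norm t ^ 4))
      \<partial>(lborel :: (real^4) measure))"
    using \<open>0 < c\<close> by (subst nn_integral_cmult[symmetric]) (simp_all add: ennreal_mult' mult.left_commute)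
  also have "\<dots> \<le> (\<integral>\<^sup>+t. ennreal (letter_weight l t * propagator t y / pi ^ 2) \<partial>lborel)"
    by (intro nn_integral_mono lower)
  finally show ?thesis by (simp add: top_unique)
qed

lemma nn_integral_letter_propagator_pos:
  "0 < (\<integral>\<^sup>+t. ennreal (letter_weight l t * propagator t y / pi ^ 2) \<partial>lborel)"
proof (rule ccontr)
  assume "\<not> ?thesis"
  then have "AE t in lborel. ennreal (letter_weight l t * propagator t y / pi ^ 2) = 0"
    by (subst nn_integral_0_iff_AE[symmetric]) (simp_all add: zero_less_iff_neq_zero)
  then have "AE t in (lborel :: (real^4) measure). t \<notin> UNIV"
    using AE_not_external_vertex AE_lborel_singleton[of y]
    by eventually_elim (cases l, auto simp: propagator_def)
  then have "UNIV \<in> null_sets (lborel :: (real^4) measure)"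
    by (subst AE_iff_null_sets) auto
  then show False using null_setsD1 by fastforce
qed

lemma seq_integral_infinite:
  assumes "w \<noteq> []" and "hd w \<noteq> L2"
  shows "seq_integral w y = \<infinity>"
  using assms
proof (induction w arbitrary: y rule: rev_induct)
  case (snoc a v)
  show ?case
  proof (cases "v = []")
    case True
    with snoc.prems show ?thesis
      by (simp add: seq_integral_singleton nn_integral_letter_propagator_infinite)
  next
    case False
    with snoc have "seq_integral v t = \<infinity>" for t by simp
    then have "seq_integral (v @ [a]) y
        = (\<integral>\<^sup>+t. \<infinity> * ennreal (letter_weight a t * propagator t y / pi ^ 2) \<partial>lborel)"
      by (simp add: seq_integral_snoc[OF False])
    also have "\<dots> = \<infinity> * (\<integral>\<^sup>+t. ennreal (letter_weight a t * propagator t y / pi ^ 2) \<partial>lborel)"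
      by (rule nn_integral_cmult) measurable
    also have "\<dots> = \<infinity>"
      using nn_integral_letter_propagator_pos[of a y] by (simp add: ennreal_top_mult)
    finally show ?thesis .
  qed
qed simp

theorem mainTheorem7:
  fixes w :: "letter list" and z :: "real^4"
  assumes "w \<noteq> []" and "z \<noteq> 0" and "z \<noteq> e1"
  shows "seq_well_defined w z \<longleftrightarrow> hd w = L2"
proof
  assume "seq_well_defined w z"
  show "hd w = L2"
  proof (rule ccontr)
    assume "hd w \<noteq> L2"
    with \<open>seq_well_defined w z\<close> show False
      using seq_integral_infinite[OF assms(1)] by (simp add: seq_well_defined_def)
  qed
next
  assume "hd w = L2"
  then obtain C where "C < \<infinity>" and "seq_integral w z \<le> C * ennreal (external_potential 1 z)"
    using seq_integral_le_external_potential[OF assms(1)] assms(2,3) by metis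
  then show "seq_well_defined w z"
    unfolding seq_well_defined_def by (simp add: ennreal_mult_less_top le_less_trans)
qed

end
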